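(* Let $s\in\mathbb Z$ and let $\nu\neq\kappa$ be partitions with $|\nu|=|\kappa|=r$, with $\boldsymbol\beta(\nu)=(\alpha_1,\dots,\alpha_r)$ and $\boldsymbol\beta(\kappa)=(\beta_1,\dots,\beta_r)$. Put $\rho=\nu/(\nu\cap\kappa)$ and $\rho'=\kappa/(\nu\cap\kappa)$. 1) $\rho$ and $\rho'$ are both ribbons if and only if $\#(B(\nu)\cap B(\kappa))=r-2$. In this case $\rho$ and $\rho'$ have a common length $h$; let $y$ and $y'$ be the row indices of the tail and of the head of $\rho'$, and $x'$ and $x$ the row indices of the tail and of the head of $\rho$. Then $\{\alpha_i:i\neq x',y'\}=\{\beta_j:j\ne x,y\}$, $\mathrm{cont}(\mathrm{hd}\rho)=\beta_x=\alpha_{x'}-h$ and $\mathrm{cont}(\mathrm{hd}\rho')=\alpha_{y'}=\beta_y-h$. Moreover, the $r$-tuple obtained from $(\beta_1,\dots,\beta_r)$ by replacing $\beta_x$ with $\beta_x+h$ and $\beta_y$ with $\beta_y-h$ is a rearrangement of $B(\nu)$, and the permutation $\pi\in\mathfrak S_r$ arranging it in decreasing order satisfies $\ell(\pi)=\mathrm{ht}(\rho)+\mathrm{ht}(\rho')$. 2) Under the conditions of 1), exactly one of the following holds, with the stated equivalences: (i) $y\le y'<x'\le x$, which holds iff $\nu\lhd\kappa$; (ii) $x'\le x<y\le y'$, which holds iff $\kappa\lhd\nu$.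
   Context: A partition $\lambda=(\lambda_1\ge\lambda_2\ge\cdots\ge0)$ is identified with its Young diagram $\{(i,j):1\le j\le\lambda_i\}$. For a fixed integer $s$ and a partition $\lambda$ with $|\lambda|=r$, $\boldsymbol\beta(\lambda)=(\lambda_1+s,\lambda_2+s-1,\dots,\lambda_r+s-r+1)$ and $B(\lambda)$ is the set of its entries. The content of a node $(i,j)$ is $s+j-i$. A ribbon is a nonempty connected (via nodes sharing a side) skew diagram with no $2\times2$ square; its head (resp. tail) is its node with $j-i$ minimal (resp. maximal); its height $\mathrm{ht}$ is (row of head) $-$ (row of tail); its length is its number of nodes. $\lhd$ is strict dominance of partitions ($\lambda\unlhd\mu$ iff $|\lambda|=|\mu|$ and $\sum_{j\le k}\lambda_j\le\sum_{j\le k}\mu_j$ for all $k$). $\ell$ is the Coxeter length on $\mathfrak S_r$. *)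

theory Defs
  imports "HOL-Combinatorics.Permutations" "HOL-Library.Multiset"
begin

text \<open>Partitions are represented as non-increasing lists of positive naturals.
  Rows are indexed from 1; part lam i is the i-th part (0 beyond the length).\<close>

definition is_partition :: "nat list \<Rightarrow> bool" where
  "is_partition lam \<longleftrightarrow> sorted (rev lam) \<and> 0 \<notin> set lam"

definition part :: "nat list \<Rightarrow> nat \<Rightarrow> nat" where
  "part lam i = (if 1 \<le> i \<and> i \<le> length lam then lam ! (i - 1) else 0)"

definition psize :: "nat list \<Rightarrow> nat" where
  "psize lam = sum_list lam"

definition diagram :: "nat list \<Rightarrow> (nat \<times> nat) set" where
  "diagram lam = {(i, j). 1 \<le> i \<and> 1 \<le> j \<and> j \<le> part lam i}"

definition beta :: "int \<Rightarrow> nat list \<Rightarrow> nat \<Rightarrow> int" where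
  "beta s lam i = int (part lam i) + s - int i + 1"

definition Bset :: "int \<Rightarrow> nat \<Rightarrow> nat list \<Rightarrow> int set" where
  "Bset s r lam = beta s lam ` {1..r}"

definition content :: "int \<Rightarrow> nat \<times> nat \<Rightarrow> int" where
  "content s p = s + int (snd p) - int (fst p)"

definition is_skew_diagram :: "(nat \<times> nat) set \<Rightarrow> bool" where
  "is_skew_diagram S \<longleftrightarrow> (\<exists>lam mu. is_partition lam \<and> is_partition mu \<and>
      diagram mu \<subseteq> diagram lam \<and> S = diagram lam - diagram mu)"

definition node_adj :: "nat \<times> nat \<Rightarrow> nat \<times> nat \<Rightarrow> bool" where
  "node_adj p q \<longleftrightarrow>
     (fst p = fst q \<and> (snd p = snd q + 1 \<or> snd q = snd p + 1)) \<or>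
     (snd p = snd q \<and> (fst p = fst q + 1 \<or> fst q = fst p + 1))"

definition connected_nodes :: "(nat \<times> nat) set \<Rightarrow> bool" where
  "connected_nodes S \<longleftrightarrow>
     (\<forall>p\<in>S. \<forall>q\<in>S. (\<lambda>a b. a \<in> S \<and> b \<in> S \<and> node_adj a b)\<^sup>*\<^sup>* p q)"

definition has_2x2 :: "(nat \<times> nat) set \<Rightarrow> bool" where
  "has_2x2 S \<longleftrightarrow> (\<exists>i j. (i, j) \<in> S \<and> (i + 1, j) \<in> S \<and> (i, j + 1) \<in> S \<and> (i + 1, j + 1) \<in> S)"

definition is_ribbon :: "(nat \<times> nat) set \<Rightarrow> bool" where
  "is_ribbon S \<longleftrightarrow> S \<noteq> {} \<and> is_skew_diagram S \<and> connected_nodes S \<and> \<not> has_2x2 S"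

definition diag :: "nat \<times> nat \<Rightarrow> int" where
  "diag p = int (snd p) - int (fst p)"

definition head :: "(nat \<times> nat) set \<Rightarrow> nat \<times> nat" where
  "head S = (THE p. p \<in> S \<and> (\<forall>q\<in>S. diag p \<le> diag q))"

definition tail :: "(nat \<times> nat) set \<Rightarrow> nat \<times> nat" where
  "tail S = (THE p. p \<in> S \<and> (\<forall>q\<in>S. diag q \<le> diag p))"

definition ht :: "(nat \<times> nat) set \<Rightarrow> int" where
  "ht S = int (fst (head S)) - int (fst (tail S))"

definition coxeter_length :: "nat \<Rightarrow> (nat \<Rightarrow> nat) \<Rightarrow> nat" where
  "coxeter_length r \<pi> = card {(i, j). 1 \<le> i \<and> i < j \<and> j \<le> r \<and> \<pi> j < \<pi> i}"

definition dominated :: "nat list \<Rightarrow> nat list \<Rightarrow> bool" where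
  "dominated lam mu \<longleftrightarrow> psize lam = psize mu \<and>
     (\<forall>k. (\<Sum>j=1..k. part lam j) \<le> (\<Sum>j=1..k. part mu j))"

definition strictly_dominated :: "nat list \<Rightarrow> nat list \<Rightarrow> bool" where
  "strictly_dominated lam mu \<longleftrightarrow> dominated lam mu \<and> lam \<noteq> mu"

end

(* The skew diagram rho lives in the excess rows of nu over kappa (the rows where
   nu is longer), rho' in those of kappa over nu. A skew diagram of this kind is a ribbon iff its
   rows form an interval x'..x in which the last node of each row lies directly below the first
   node of the row above, i.e. beta_(i+1)(nu) = beta_i(kappa) for x' <= i < x.
   A beta-number of nu in an excess row can only equal a beta-number of kappa further up, all
   rows in between being excess rows. Hence beta_x'(nu), from the top excess row, and dually
   beta_y'(nu), from the bottom row of rho', never lie in B(kappa), so #(B(nu) Int B(kappa)) = r - 2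
   says that every other beta-number of nu is matched; an induction along the rows shows that
   this forces both skew diagrams to be ribbons, and conversely two ribbons match all the other
   beta-numbers by the shifts above. The matching is the permutation
   (x' x x-1 ... x'+1)(y' y y+1 ... y'-1) of positions, the unique one sorting gamma, and its
   inversions are counted directly. Finally the two row intervals are disjoint, and the partition
   whose excess rows come first dominates the other. *)

theory Submission
  imports Defs
begin

section \<open>Partitions, diagrams and beta-numbers\<close>

lemma part_antimono:
  assumes "is_partition L" "1 \<le> i" "i \<le> j"
  shows "part L j \<le> part L i"
  using assms sorted_rev_nth_mono[of L "i - 1" "j - 1"] by (auto simp: is_partition_def part_def)

lemma part_pos_iff:
  assumes "is_partition L"
  shows "0 < part L i \<longleftrightarrow> 1 \<le> i \<and> i \<le> length L"
proof -
  have "L ! (i - 1) \<noteq> 0" if "1 \<le> i" "i \<le> length L"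
  proof -
    have "L ! (i - 1) \<in> set L" using that by simp
    then show ?thesis using assms unfolding is_partition_def by metis
  qed
  then show ?thesis by (auto simp: part_def)
qed

lemma sum_list_eq_sum_part:
  assumes "length L \<le> N"
  shows "sum_list L = (\<Sum>i=1..N. part L i)"
proof -
  have "sum_list L = (\<Sum>i<length L. L ! i)"
    by (simp add: sum_list_sum_nth atLeast0LessThan)
  also have "\<dots> = (\<Sum>i=1..length L. part L i)"
    by (rule sum.reindex_bij_witness[where i="\<lambda>i. i - 1" and j="\<lambda>i. i + 1"]) (auto simp: part_def)
  also have "\<dots> = (\<Sum>i=1..N. part L i)"
    by (rule sum.mono_neutral_left) (use assms in \<open>auto simp: part_def\<close>)
  finally show ?thesis .
qed

lemma length_le_psize:
  assumes "is_partition L"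
  shows "length L \<le> psize L"
proof -
  have "sum_list (map (\<lambda>_. 1::nat) L) \<le> sum_list L"
    using assms sum_list_mono[of L "\<lambda>_. 1" id] by (auto simp: is_partition_def Suc_le_eq intro: gr0I)
  then show ?thesis by (simp add: psize_def sum_list_triv)
qed

lemma partition_eqI:
  assumes "is_partition P" "is_partition Q" "\<And>i. 1 \<le> i \<Longrightarrow> part P i = part Q i"
  shows "P = Q"
proof (rule nth_equalityI)
  have "length A \<le> length B"
    if "is_partition A" "is_partition B" "\<And>i. 1 \<le> i \<Longrightarrow> part A i = part B i" for A B
    using part_pos_iff[OF that(1), of "length A"] part_pos_iff[OF that(2), of "length A"]
      that(3)[of "length A"] by (cases "length A = 0") auto
  then show len: "length P = length Q"
    using assms by (metis order.antisym)
  fix i assume "i < length P"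
  then show "P ! i = Q ! i" using assms(3)[of "Suc i"] len by (simp add: part_def)
qed

lemma beta_strict_antimono:
  assumes "is_partition L" "1 \<le> i" "i < j"
  shows "beta s L j < beta s L i"
  using part_antimono[OF assms(1,2), of j] assms(3) by (simp add: beta_def)

lemma beta_antimono:
  assumes "is_partition L" "1 \<le> i" "i \<le> j"
  shows "beta s L j \<le> beta s L i"
  using part_antimono[OF assms] assms(3) by (simp add: beta_def)

lemma inj_on_beta:
  assumes "is_partition L"
  shows "inj_on (beta s L) {1..}"
proof (rule inj_onI)
  fix i j assume "i \<in> {1..}" "j \<in> {1..}" "beta s L i = beta s L j"
  then show "i = j"
    using beta_strict_antimono[OF assms, of i j s] beta_strict_antimono[OF assms, of j i s]
    by (cases i j rule: linorder_cases) auto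
qed

lemma card_Bset: "is_partition L \<Longrightarrow> card (Bset s r L) = r"
  unfolding Bset_def by (subst card_image[OF inj_on_subset[OF inj_on_beta]]) auto

lemma diagram_eq_Sigma: "diagram L = (SIGMA i:{1..length L}. {1..part L i})"
  by (auto simp: diagram_def part_def split: if_splits)

lemma finite_diagram: "finite (diagram L)"
  by (simp add: diagram_eq_Sigma)

lemma card_diagram: "card (diagram L) = psize L"
  by (simp add: diagram_eq_Sigma psize_def sum_list_eq_sum_part[of L "length L"])

definition meet :: "nat list \<Rightarrow> nat list \<Rightarrow> nat list" where
  "meet P Q = map2 min P Q"

lemma part_meet: "part (meet P Q) i = min (part P i) (part Q i)"
proof (cases "1 \<le> i \<and> i \<le> length P \<and> i \<le> length Q")
  case True
  then have "map2 min P Q ! (i - 1) = min (P ! (i - 1)) (Q ! (i - 1))" by (subst nth_map) auto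
  then show ?thesis using True by (simp add: meet_def part_def)
qed (auto simp: meet_def part_def)

lemma is_partition_meet:
  assumes "is_partition P" "is_partition Q"
  shows "is_partition (meet P Q)"
proof -
  have "sorted (rev P)" "sorted (rev Q)" using assms by (simp_all add: is_partition_def)
  then have "sorted (rev (map2 min P Q))"
    unfolding sorted_rev_iff_nth_mono by (auto intro: min.coboundedI1 min.coboundedI2)
  moreover have "0 \<notin> set (map2 min P Q)"
    using assms by (auto simp: is_partition_def min_def split: if_splits dest: set_zip_leftD set_zip_rightD)
  ultimately show ?thesis by (simp add: is_partition_def meet_def)
qed

lemma diagram_meet: "diagram (meet P Q) = diagram P \<inter> diagram Q"
  by (auto simp: diagram_def part_meet)

lemma is_skew_diagram_diff:
  assumes "is_partition P" "is_partition Q"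
  shows "is_skew_diagram (diagram P - diagram Q)"
  unfolding is_skew_diagram_def
  using assms is_partition_meet[OF assms] diagram_meet[of P Q] by blast

definition excess_rows :: "nat list \<Rightarrow> nat list \<Rightarrow> nat set" where
  "excess_rows P Q = {i. 1 \<le> i \<and> part Q i < part P i}"

lemma excess_rows_subset: "excess_rows P Q \<subseteq> {1..length P}"
  by (auto simp: excess_rows_def part_def split: if_splits)

lemma finite_excess_rows: "finite (excess_rows P Q)"
  using excess_rows_subset finite_subset by blast

lemma excess_rows_disjoint: "i \<in> excess_rows P Q \<Longrightarrow> i \<notin> excess_rows Q P"
  by (simp add: excess_rows_def)

lemma diagram_diff_eq_Sigma:
  "diagram P - diagram Q = (SIGMA i:excess_rows P Q. {part Q i<..part P i})"
  by (auto simp: diagram_def excess_rows_def)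

lemma card_diagram_diff:
  "card (diagram P - diagram Q) = (\<Sum>i\<in>excess_rows P Q. part P i - part Q i)"
  by (simp add: diagram_diff_eq_Sigma finite_excess_rows)

lemma row_ends_in_diagram_diff:
  assumes "i \<in> excess_rows P Q"
  shows "(i, part Q i + 1) \<in> diagram P - diagram Q" "(i, part P i) \<in> diagram P - diagram Q"
  using assms by (auto simp: excess_rows_def diagram_def)

lemma diagram_diff_empty_iff: "diagram P - diagram Q = {} \<longleftrightarrow> excess_rows P Q = {}"
  using row_ends_in_diagram_diff(2)[of _ P Q] diagram_diff_eq_Sigma[of P Q] by blast

section \<open>Ribbons as intervals of rows\<close>

text \<open>In the rows t..u of P/Q, the last node of row i+1 lies directly below the first node of row i.\<close>

definition ribbon_rows :: "nat list \<Rightarrow> nat list \<Rightarrow> nat \<Rightarrow> nat \<Rightarrow> bool" where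
  "ribbon_rows P Q t u \<longleftrightarrow> 1 \<le> t \<and> t \<le> u \<and> excess_rows P Q = {t..u} \<and>
     (\<forall>i. t \<le> i \<longrightarrow> i < u \<longrightarrow> part P (Suc i) = part Q i + 1)"

lemma ribbon_rows_beta_Suc:
  assumes "ribbon_rows P Q t u" "t \<le> i" "i < u"
  shows "beta s P (Suc i) = beta s Q i"
  using assms by (simp add: ribbon_rows_def beta_def)

lemma ribbon_rows_Min_Max:
  assumes "ribbon_rows P Q t u"
  shows "Min (excess_rows P Q) = t" "Max (excess_rows P Q) = u"
  using assms by (auto simp: ribbon_rows_def intro!: Min_eqI Max_eqI)

definition adj_in :: "(nat \<times> nat) set \<Rightarrow> nat \<times> nat \<Rightarrow> nat \<times> nat \<Rightarrow> bool" where
  "adj_in S p q \<longleftrightarrow> p \<in> S \<and> q \<in> S \<and> node_adj p q"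

lemma connected_nodes_iff_adj_in:
  "connected_nodes S \<longleftrightarrow> (\<forall>p\<in>S. \<forall>q\<in>S. (adj_in S)\<^sup>*\<^sup>* p q)"
  by (simp add: connected_nodes_def adj_in_def[abs_def])

lemma adj_in_rtranclp_sym: "(adj_in S)\<^sup>*\<^sup>* p q \<Longrightarrow> (adj_in S)\<^sup>*\<^sup>* q p"
proof -
  have "(adj_in S)\<inverse>\<inverse> = adj_in S" by (auto simp: adj_in_def node_adj_def fun_eq_iff)
  then show "(adj_in S)\<^sup>*\<^sup>* p q \<Longrightarrow> (adj_in S)\<^sup>*\<^sup>* q p" by (metis rtranclp_converseI)
qed

lemma adj_in_rtranclp_row_le:
  assumes "(adj_in S)\<^sup>*\<^sup>* p q" "fst p \<le> i" "\<And>j. (i, j) \<in> S \<Longrightarrow> (Suc i, j) \<notin> S"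
  shows "fst q \<le> i"
  using assms(1,2)
proof (induction rule: rtranclp_induct)
  case (step b c)
  obtain b1 b2 c1 c2 where bc: "b = (b1, b2)" "c = (c1, c2)" by fastforce
  show ?case
  proof (rule ccontr)
    assume "\<not> fst c \<le> i"
    then have "b = (i, b2)" "c = (Suc i, b2)"
      using step bc by (auto simp: adj_in_def node_adj_def)
    then show False using step.hyps(2) assms(3) by (auto simp: adj_in_def)
  qed
qed

lemma adj_in_rtranclp_along_row:
  assumes "(i, j) \<in> diagram P - diagram Q"
  shows "(adj_in (diagram P - diagram Q))\<^sup>*\<^sup>* (i, j) (i, part P i)"
proof -
  have "j \<le> part P i" using assms by (simp add: diagram_def)
  then show ?thesis using assms
  proof (induction j rule: inc_induct)
    case (step j)
    then have "adj_in (diagram P - diagram Q) (i, j) (i, Suc j)"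
      by (auto simp: adj_in_def node_adj_def diagram_def)
    with step show ?case by (meson converse_rtranclp_into_rtranclp adj_in_def)
  qed simp
qed

lemma excess_rows_interval_if_connected:
  assumes "connected_nodes (diagram P - diagram Q)"
    and "a \<in> excess_rows P Q" "b \<in> excess_rows P Q" "a \<le> l" "l \<le> b"
  shows "l \<in> excess_rows P Q"
proof (rule ccontr)
  assume l: "l \<notin> excess_rows P Q"
  then have "a \<noteq> l" "b \<noteq> l" using assms(2,3) by auto
  then have "a < l" "l < b" using assms(4,5) by simp_all
  have "(adj_in (diagram P - diagram Q))\<^sup>*\<^sup>* (a, part P a) (b, part P b)"
    using assms(1-3) row_ends_in_diagram_diff by (simp add: connected_nodes_iff_adj_in)
  then have "fst (b, part P b) \<le> l - 1"
  proof (rule adj_in_rtranclp_row_le)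
    show "(Suc (l - 1), j) \<notin> diagram P - diagram Q" for j
      using l \<open>a < l\<close> by (auto simp: diagram_def excess_rows_def)
  qed (use \<open>a < l\<close> in simp)
  then show False using \<open>l < b\<close> by simp
qed

lemma part_Suc_if_ribbon:
  assumes "is_partition P" "is_partition Q" "is_ribbon (diagram P - diagram Q)"
    and "i \<in> excess_rows P Q" "Suc i \<in> excess_rows P Q"
  shows "part P (Suc i) = part Q i + 1"
proof -
  let ?S = "diagram P - diagram Q"
  have i: "1 \<le> i" "part Q i < part P i" using assms(4) by (auto simp: excess_rows_def)
  \<comment> \<open>Any shorter overlap would disconnect rows i and i+1, any longer one yields a 2x2 square.\<close>
  have "\<not> part P (Suc i) \<le> part Q i"
  proof
    assume le: "part P (Suc i) \<le> part Q i"
    have path: "(adj_in ?S)\<^sup>*\<^sup>* (i, part P i) (Suc i, part P (Suc i))"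
      using assms(3-5) row_ends_in_diagram_diff
      by (simp add: is_ribbon_def connected_nodes_iff_adj_in)
    have "(Suc i, j) \<notin> ?S" if "(i, j) \<in> ?S" for j
      using that le by (auto simp: diagram_def)
    then have "fst (Suc i, part P (Suc i)) \<le> i"
      using adj_in_rtranclp_row_le[OF path] by simp
    then show False by simp
  qed
  moreover have "\<not> part Q i + 2 \<le> part P (Suc i)"
  proof
    assume big: "part Q i + 2 \<le> part P (Suc i)"
    have "part P (Suc i) \<le> part P i" "part Q (Suc i) \<le> part Q i"
      using part_antimono assms(1,2) i(1) by auto
    then have "(i, part Q i + 1) \<in> ?S" "(i + 1, part Q i + 1) \<in> ?S"
      "(i, part Q i + 1 + 1) \<in> ?S" "(i + 1, part Q i + 1 + 1) \<in> ?S"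
      using big i(1) by (simp_all add: diagram_def)
    then have "has_2x2 ?S" unfolding has_2x2_def by blast
    then show False using assms(3) by (simp add: is_ribbon_def)
  qed
  ultimately show ?thesis by linarith
qed

lemma ribbon_rows_if_is_ribbon:
  assumes "is_partition P" "is_partition Q" "is_ribbon (diagram P - diagram Q)"
  shows "ribbon_rows P Q (Min (excess_rows P Q)) (Max (excess_rows P Q))"
proof -
  let ?R = "excess_rows P Q"
  have ne: "?R \<noteq> {}" using assms(3) diagram_diff_empty_iff by (auto simp: is_ribbon_def)
  have conn: "connected_nodes (diagram P - diagram Q)" using assms(3) by (simp add: is_ribbon_def)
  have Min: "Min ?R \<in> ?R" and Max: "Max ?R \<in> ?R"
    using ne by (simp_all add: finite_excess_rows)
  have R: "?R = {Min ?R..Max ?R}"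
  proof
    show "?R \<subseteq> {Min ?R..Max ?R}" by (auto simp: finite_excess_rows)
    show "{Min ?R..Max ?R} \<subseteq> ?R"
      using excess_rows_interval_if_connected[OF conn Min Max] by auto
  qed
  moreover have "1 \<le> Min ?R" using Min_in[OF finite_excess_rows ne] by (simp add: excess_rows_def)
  moreover have "Min ?R \<le> Max ?R" using ne by (simp add: finite_excess_rows)
  moreover have "part P (Suc i) = part Q i + 1" if "Min ?R \<le> i" "i < Max ?R" for i
  proof (rule part_Suc_if_ribbon[OF assms])
    show "i \<in> ?R" "Suc i \<in> ?R" using that by (subst R; simp)+
  qed
  ultimately show ?thesis by (simp add: ribbon_rows_def)
qed

lemma ribbon_rows_connected:
  assumes "is_partition Q" "ribbon_rows P Q t u"
  shows "connected_nodes (diagram P - diagram Q)"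
proof -
  let ?S = "diagram P - diagram Q"
  have R: "excess_rows P Q = {t..u}" and t: "1 \<le> t"
    using assms(2) by (auto simp: ribbon_rows_def)
  have up: "(adj_in ?S)\<^sup>*\<^sup>* (Suc i, part P (Suc i)) (i, part P i)" if "t \<le> i" "i < u" for i
  proof -
    have P: "part P (Suc i) = part Q i + 1" using assms(2) that by (simp add: ribbon_rows_def)
    have "part Q (Suc i) \<le> part Q i" using part_antimono[OF assms(1)] t that(1) by simp
    moreover have first: "(i, part Q i + 1) \<in> ?S"
      using R that row_ends_in_diagram_diff(1)[of i P Q] by simp
    ultimately have "adj_in ?S (Suc i, part Q i + 1) (i, part Q i + 1)"
      using P t that by (auto simp: adj_in_def node_adj_def diagram_def)
    from converse_rtranclp_into_rtranclp[OF this adj_in_rtranclp_along_row[OF first]]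
    show ?thesis using P by simp
  qed
  have to_top: "(adj_in ?S)\<^sup>*\<^sup>* (i, part P i) (t, part P t)" if "t \<le> i" "i \<le> u" for i
    using that
  proof (induction i rule: dec_induct)
    case (step i)
    then have "i < u" by simp
    with step have "(adj_in ?S)\<^sup>*\<^sup>* (Suc i, part P (Suc i)) (i, part P i)"
      and "(adj_in ?S)\<^sup>*\<^sup>* (i, part P i) (t, part P t)"
      using up by simp_all
    then show ?case by (rule rtranclp_trans)
  qed simp
  have to_corner: "(adj_in ?S)\<^sup>*\<^sup>* p (t, part P t)" if "p \<in> ?S" for p
  proof -
    obtain i j where p: "p = (i, j)" by fastforce
    have "i \<in> {t..u}" using that p R by (auto simp: diagram_def excess_rows_def)
    then show ?thesis
      using that p to_top[of i] adj_in_rtranclp_along_row[of i j] by (auto intro: rtranclp_trans)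
  qed
  show ?thesis
    unfolding connected_nodes_iff_adj_in
    using rtranclp_trans[OF to_corner adj_in_rtranclp_sym[OF to_corner]] by blast
qed

lemma ribbon_rows_no_2x2:
  assumes "ribbon_rows P Q t u"
  shows "\<not> has_2x2 (diagram P - diagram Q)"
proof
  assume "has_2x2 (diagram P - diagram Q)"
  then obtain i j where ij: "(i, j) \<in> diagram P - diagram Q" "(i + 1, j + 1) \<in> diagram P - diagram Q"
    unfolding has_2x2_def by blast
  then have "i \<in> excess_rows P Q" "Suc i \<in> excess_rows P Q"
    by (auto simp: diagram_def excess_rows_def)
  then have "part P (Suc i) = part Q i + 1" using assms by (auto simp: ribbon_rows_def)
  then show False using ij by (simp add: diagram_def)
qed

text \<open>If P/Q is empty, Min and Max below are junk, but then ribbon_rows fails as it should.\<close>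

lemma is_ribbon_diff_iff:
  assumes "is_partition P" "is_partition Q"
  shows "is_ribbon (diagram P - diagram Q) \<longleftrightarrow>
    ribbon_rows P Q (Min (excess_rows P Q)) (Max (excess_rows P Q))"
proof
  assume "ribbon_rows P Q (Min (excess_rows P Q)) (Max (excess_rows P Q))"
  moreover from this have "diagram P - diagram Q \<noteq> {}"
    unfolding diagram_diff_empty_iff ribbon_rows_def by auto
  ultimately show "is_ribbon (diagram P - diagram Q)"
    unfolding is_ribbon_def
    using is_skew_diagram_diff[OF assms] ribbon_rows_connected[OF assms(2)] ribbon_rows_no_2x2
    by blast
qed (rule ribbon_rows_if_is_ribbon[OF assms])

section \<open>Heads, tails and lengths of ribbons\<close>

lemma head_eqI:
  assumes "p \<in> S" "\<And>q. q \<in> S \<Longrightarrow> q \<noteq> p \<Longrightarrow> diag p < diag q"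
  shows "head S = p"
  unfolding head_def
proof (rule the_equality)
  show "p \<in> S \<and> (\<forall>q\<in>S. diag p \<le> diag q)" using assms by force
qed (use assms in force)

lemma tail_eqI:
  assumes "p \<in> S" "\<And>q. q \<in> S \<Longrightarrow> q \<noteq> p \<Longrightarrow> diag q < diag p"
  shows "tail S = p"
  unfolding tail_def
proof (rule the_equality)
  show "p \<in> S \<and> (\<forall>q\<in>S. diag q \<le> diag p)" using assms by force
qed (use assms in force)

lemma head_ribbon:
  assumes "is_partition Q" "ribbon_rows P Q t u"
  shows "head (diagram P - diagram Q) = (u, part Q u + 1)"
proof (rule head_eqI)
  have R: "excess_rows P Q = {t..u}" "1 \<le> t" "t \<le> u" using assms(2) by (auto simp: ribbon_rows_def)
  then show "(u, part Q u + 1) \<in> diagram P - diagram Q"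
    using row_ends_in_diagram_diff(1)[of u P Q] by simp
  fix q assume q: "q \<in> diagram P - diagram Q" "q \<noteq> (u, part Q u + 1)"
  obtain i j where ij: "q = (i, j)" by fastforce
  have "i \<in> {t..u}" "part Q i < j" using q ij R by (auto simp: diagram_def excess_rows_def)
  \<comment> \<open>beta 0 Q i is the diagonal j - i of the first node (i, part Q i + 1) of row i.\<close>
  moreover have "beta 0 Q u < beta 0 Q i" if "i < u"
    using beta_strict_antimono[OF assms(1) _ that] R \<open>i \<in> {t..u}\<close> by simp
  ultimately show "diag (u, part Q u + 1) < diag q"
    using q(2) ij by (cases "i = u") (auto simp: diag_def beta_def)
qed

lemma tail_ribbon:
  assumes "is_partition P" "ribbon_rows P Q t u"
  shows "tail (diagram P - diagram Q) = (t, part P t)"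
proof (rule tail_eqI)
  have R: "excess_rows P Q = {t..u}" "1 \<le> t" "t \<le> u" using assms(2) by (auto simp: ribbon_rows_def)
  then show "(t, part P t) \<in> diagram P - diagram Q"
    using row_ends_in_diagram_diff(2)[of t P Q] by simp
  fix q assume q: "q \<in> diagram P - diagram Q" "q \<noteq> (t, part P t)"
  obtain i j where ij: "q = (i, j)" by fastforce
  have "i \<in> {t..u}" "j \<le> part P i" using q ij R by (auto simp: diagram_def excess_rows_def)
  moreover have "beta 0 P i < beta 0 P t" if "t < i"
    using beta_strict_antimono[OF assms(1) _ that] R by simp
  ultimately show "diag q < diag (t, part P t)"
    using q(2) ij by (cases "i = t") (auto simp: diag_def beta_def)
qed

lemma content_head_ribbon:
  assumes "is_partition Q" "ribbon_rows P Q t u"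
  shows "content s (head (diagram P - diagram Q)) = beta s Q u"
  unfolding head_ribbon[OF assms] by (simp add: content_def beta_def)

lemma ht_ribbon:
  assumes "is_partition P" "is_partition Q" "ribbon_rows P Q t u"
  shows "ht (diagram P - diagram Q) = int u - int t"
  unfolding ht_def head_ribbon[OF assms(2,3)] tail_ribbon[OF assms(1,3)] by simp

lemma sum_diff_telescope:
  fixes f g :: "nat \<Rightarrow> int"
  assumes "t \<le> u" "\<And>i. t \<le> i \<Longrightarrow> i < u \<Longrightarrow> f (Suc i) = g i + 1"
  shows "(\<Sum>i=t..u. f i - g i) = f t - g u + (int u - int t)"
proof -
  have "(\<Sum>i=t..v. f i - g i) = f t - g v + (int v - int t)" if "t \<le> v" "v \<le> u" for v
    using that
  proof (induction v rule: dec_induct)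
    case (step v)
    then have "f (Suc v) = g v + 1" using assms(2) by simp
    with step show ?case by (simp add: sum.cl_ivl_Suc)
  qed simp
  then show ?thesis using assms(1) by simp
qed

lemma card_ribbon:
  assumes "ribbon_rows P Q t u"
  shows "int (card (diagram P - diagram Q)) = beta s P t - beta s Q u"
proof -
  have R: "excess_rows P Q = {t..u}" and "t \<le> u"
    and adj: "\<And>i. t \<le> i \<Longrightarrow> i < u \<Longrightarrow> part P (Suc i) = part Q i + 1"
    using assms by (auto simp: ribbon_rows_def)
  have "int (card (diagram P - diagram Q)) = (\<Sum>i=t..u. int (part P i) - int (part Q i))"
    unfolding card_diagram_diff R of_nat_sum
  proof (rule sum.cong)
    fix i assume "i \<in> {t..u}"
    then have "i \<in> excess_rows P Q" using R by simp
    then show "int (part P i - part Q i) = int (part P i) - int (part Q i)"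
      by (simp add: excess_rows_def of_nat_diff)
  qed simp
  also have "\<dots> = int (part P t) - int (part Q u) + (int u - int t)"
    by (rule sum_diff_telescope[where f = "\<lambda>i. int (part P i)" and g = "\<lambda>i. int (part Q i)"])
      (use \<open>t \<le> u\<close> adj in simp_all)
  finally show ?thesis by (simp add: beta_def)
qed

section \<open>Matching beta-numbers\<close>

lemma beta_Suc_eq_iff: "beta s P (Suc i) = beta s Q i \<longleftrightarrow> part P (Suc i) = part Q i + 1"
  by (simp add: beta_def) arith

lemma beta_eq_beta_excess_row:
  assumes "is_partition P" "is_partition Q" "i \<in> excess_rows P Q" "1 \<le> j"
    and "beta s P i = beta s Q j"
  shows "j < i" "{j..i} \<subseteq> excess_rows P Q"
proof -
  have i: "1 \<le> i" "part Q i < part P i" using assms(3) by (auto simp: excess_rows_def)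
  then have "beta s Q i < beta s Q j" using assms(5) by (simp add: beta_def)
  then show "j < i" using beta_antimono[OF assms(2) i(1), of j s] by linarith
  then have "part Q j < part P i" using assms(5) by (simp add: beta_def)
  moreover have "part Q l \<le> part Q j" "part P i \<le> part P l" if "j \<le> l" "l \<le> i" for l
    using part_antimono[OF assms(2,4) that(1)] part_antimono[OF assms(1) _ that(2)] that assms(4)
    by simp_all
  ultimately show "{j..i} \<subseteq> excess_rows P Q"
    using assms(4) by (fastforce simp: excess_rows_def)
qed

lemma beta_eq_beta_deficit_row:
  assumes "is_partition P" "is_partition Q" "i \<in> excess_rows Q P" "1 \<le> j"
    and "beta s P i = beta s Q j"
  shows "i < j" "{i..j} \<subseteq> excess_rows Q P"
proof -
  have i: "1 \<le> i" "part P i < part Q i" using assms(3) by (auto simp: excess_rows_def)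
  then have "beta s P i < beta s Q i" by (simp add: beta_def)
  then show "i < j" using assms(5) beta_antimono[OF assms(2,4), of i s] by linarith
  then have "part P i < part Q j" using assms(5) by (simp add: beta_def)
  moreover have "part P l \<le> part P i" "part Q j \<le> part Q l" if "i \<le> l" "l \<le> j" for l
    using part_antimono[OF assms(1) i(1) that(1)] part_antimono[OF assms(2) _ that(2)] that i(1)
    by simp_all
  ultimately show "{i..j} \<subseteq> excess_rows Q P"
    using i(1) by (fastforce simp: excess_rows_def)
qed

context
  fixes P Q :: "nat list" and s :: int
  assumes partition_P: "is_partition P" and partition_Q: "is_partition Q"
    and excess_nonempty: "excess_rows P Q \<noteq> {}"
    and beta_matched: "\<And>i. i \<in> excess_rows P Q \<Longrightarrow> i \<noteq> Min (excess_rows P Q) \<Longrightarrow>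
      \<exists>j\<ge>1. beta s P i = beta s Q j"
begin

lemma beta_matched_below:
  assumes "i \<in> excess_rows P Q" "i \<noteq> Min (excess_rows P Q)"
  obtains j where "j < i" "Min (excess_rows P Q) \<le> j" "{j..i} \<subseteq> excess_rows P Q"
    "beta s P i = beta s Q j"
proof -
  obtain j where j: "1 \<le> j" "beta s P i = beta s Q j" using beta_matched assms by blast
  note below = beta_eq_beta_excess_row[OF partition_P partition_Q assms(1) j]
  then have "j \<in> excess_rows P Q" by auto
  then have "Min (excess_rows P Q) \<le> j" by (simp add: finite_excess_rows)
  from below(1) this below(2) j(2) show ?thesis by (rule that)
qed

lemma excess_rows_interval_if_beta_matched:
  "excess_rows P Q = {Min (excess_rows P Q)..Max (excess_rows P Q)}"
proof
  show "{Min (excess_rows P Q)..Max (excess_rows P Q)} \<subseteq> excess_rows P Q"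
  proof
    fix l assume l: "l \<in> {Min (excess_rows P Q)..Max (excess_rows P Q)}"
    then have "l \<le> Max (excess_rows P Q)" by simp
    then show "l \<in> excess_rows P Q"
    proof (induction l rule: inc_induct)
      case base
      show ?case using excess_nonempty finite_excess_rows by simp
    next
      case (step n)
      have "Suc n \<noteq> Min (excess_rows P Q)" using l step.hyps(1) by simp
      then obtain j where "j < Suc n" "{j..Suc n} \<subseteq> excess_rows P Q"
        using beta_matched_below[OF step.IH] by blast
      then show ?case by auto
    qed
  qed
qed (auto simp: finite_excess_rows)

lemma ribbon_rows_if_beta_matched:
  "ribbon_rows P Q (Min (excess_rows P Q)) (Max (excess_rows P Q))"
proof -
  define x u where "x = Min (excess_rows P Q)" and "u = Max (excess_rows P Q)"
  have R: "excess_rows P Q = {x..u}"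
    unfolding x_def u_def by (rule excess_rows_interval_if_beta_matched)
  have "x \<in> excess_rows P Q" using excess_nonempty finite_excess_rows by (simp add: x_def)
  then have x1: "1 \<le> x" by (simp add: excess_rows_def)
  have "x \<le> u" using R excess_nonempty by auto
  have "beta s P (Suc i) = beta s Q i" if "x \<le> i" "i < u" for i
    using that
  proof (induction i rule: dec_induct)
    case base
    have "Suc x \<in> excess_rows P Q" "Suc x \<noteq> x" using base R by simp_all
    then obtain j where "j < Suc x" "x \<le> j" "beta s P (Suc x) = beta s Q j"
      using beta_matched_below unfolding x_def by blast
    moreover from calculation(1,2) have "j = x" by linarith
    ultimately show ?case by simp
  next
    case (step i)
    have IH: "beta s P (Suc i) = beta s Q i" using step.IH step.prems by simp
    have "Suc (Suc i) \<in> excess_rows P Q" "Suc (Suc i) \<noteq> x" using step.hyps(1) step.prems R by simp_all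
    then obtain j where j: "j < Suc (Suc i)" "x \<le> j" "beta s P (Suc (Suc i)) = beta s Q j"
      using beta_matched_below unfolding x_def by blast
    \<comment> \<open>The partner j of row i+2 lies strictly below the partner i of row i+1.\<close>
    have "beta s P (Suc (Suc i)) < beta s P (Suc i)"
      using beta_strict_antimono[OF partition_P, of "Suc i" "Suc (Suc i)"] by simp
    then have "beta s Q j < beta s Q i" using IH j(3) by simp
    moreover have "beta s Q i \<le> beta s Q j" if "j \<le> i"
      using beta_antimono[OF partition_Q _ that] x1 j(2) by simp
    ultimately have "j = Suc i" using j(1) by linarith
    then show ?case using j(3) by simp
  qed
  with R x1 \<open>x \<le> u\<close> show ?thesis
    unfolding ribbon_rows_def x_def[symmetric] u_def[symmetric] by (simp add: beta_Suc_eq_iff)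
qed

end

lemma part_eq_card_row:
  assumes "1 \<le> i"
  shows "part L i = card {j. (i, j) \<in> diagram L}"
proof -
  have "{j. (i, j) \<in> diagram L} = {1..part L i}" using assms by (auto simp: diagram_def)
  then show ?thesis by simp
qed

lemma diagram_inj:
  assumes "is_partition P" "is_partition Q" "diagram P = diagram Q"
  shows "P = Q"
  using assms by (auto intro: partition_eqI simp: part_eq_card_row)

locale equal_size_partitions =
  fixes P Q :: "nat list" and r :: nat
  assumes partition_P: "is_partition P" and partition_Q: "is_partition Q"
    and psize_P: "psize P = r" and psize_Q: "psize Q = r"
begin

lemma equal_size_partitions_sym: "equal_size_partitions Q P r"
  using partition_P partition_Q psize_P psize_Q by unfold_locales

lemma excess_rows_subset_r: "excess_rows P Q \<subseteq> {1..r}" "excess_rows Q P \<subseteq> {1..r}"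
  using excess_rows_subset length_le_psize partition_P partition_Q psize_P psize_Q by fastforce+

lemma excess_rows_nonempty:
  assumes "P \<noteq> Q"
  shows "excess_rows P Q \<noteq> {}"
proof
  assume "excess_rows P Q = {}"
  then have "diagram P \<subseteq> diagram Q" by (force simp: diagram_def excess_rows_def)
  moreover have "card (diagram P) = card (diagram Q)" using psize_P psize_Q by (simp add: card_diagram)
  ultimately have "diagram P = diagram Q" by (simp add: card_subset_eq finite_diagram)
  then show False using diagram_inj[OF partition_P partition_Q] assms by blast
qed

lemma extreme_rows_mem:
  assumes "P \<noteq> Q"
  shows "Min (excess_rows P Q) \<in> excess_rows P Q" "Max (excess_rows Q P) \<in> excess_rows Q P"
  using excess_rows_nonempty equal_size_partitions.excess_rows_nonempty[OF equal_size_partitions_sym]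
    assms finite_excess_rows
  by simp_all

lemma card_diagram_diff_sym: "card (diagram P - diagram Q) = card (diagram Q - diagram P)"
  using psize_P psize_Q
  by (simp add: card_Diff_subset_Int finite_diagram card_diagram Int_commute)

lemma two_le_r:
  assumes "P \<noteq> Q"
  shows "2 \<le> r"
proof -
  have "Min (excess_rows P Q) \<noteq> Max (excess_rows Q P)"
    using excess_rows_disjoint[OF extreme_rows_mem(1)[OF assms]] extreme_rows_mem(2)[OF assms] by auto
  moreover have "{Min (excess_rows P Q), Max (excess_rows Q P)} \<subseteq> {1..r}"
    using extreme_rows_mem[OF assms] excess_rows_subset_r by blast
  ultimately show ?thesis
    using card_mono[of "{1..r}" "{Min (excess_rows P Q), Max (excess_rows Q P)}"] by simp
qed

lemma beta_Min_excess_notin_Bset: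
  assumes "P \<noteq> Q"
  shows "beta s P (Min (excess_rows P Q)) \<notin> Bset s r Q"
proof
  let ?x = "Min (excess_rows P Q)"
  note x = extreme_rows_mem(1)[OF assms]
  assume "beta s P ?x \<in> Bset s r Q"
  then obtain j where "1 \<le> j" "beta s P ?x = beta s Q j" by (auto simp: Bset_def)
  from beta_eq_beta_excess_row[OF partition_P partition_Q x this]
  have "j < ?x" "j \<in> excess_rows P Q" by auto
  then show False using Min_le[OF finite_excess_rows, of j P Q] by simp
qed

lemma beta_Max_deficit_notin_Bset:
  assumes "P \<noteq> Q"
  shows "beta s P (Max (excess_rows Q P)) \<notin> Bset s r Q"
proof
  let ?y = "Max (excess_rows Q P)"
  note y = extreme_rows_mem(2)[OF assms]
  assume "beta s P ?y \<in> Bset s r Q"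
  then obtain j where "1 \<le> j" "beta s P ?y = beta s Q j" by (auto simp: Bset_def)
  from beta_eq_beta_deficit_row[OF partition_P partition_Q y this]
  have "?y < j" "j \<in> excess_rows Q P" by auto
  then show False using Max_ge[OF finite_excess_rows, of j Q P] by simp
qed

lemma Bset_inter_subset:
  assumes "P \<noteq> Q"
  shows "Bset s r P \<inter> Bset s r Q \<subseteq>
    beta s P ` ({1..r} - {Min (excess_rows P Q), Max (excess_rows Q P)})"
proof
  fix v assume v: "v \<in> Bset s r P \<inter> Bset s r Q"
  then obtain i where i: "i \<in> {1..r}" "v = beta s P i" by (auto simp: Bset_def)
  then have "i \<noteq> Min (excess_rows P Q)" "i \<noteq> Max (excess_rows Q P)"
    using v beta_Min_excess_notin_Bset[OF assms] beta_Max_deficit_notin_Bset[OF assms] by auto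
  with i show "v \<in> beta s P ` ({1..r} - {Min (excess_rows P Q), Max (excess_rows Q P)})" by auto
qed

lemma card_Bset_inter_eq_iff:
  assumes "P \<noteq> Q"
  shows "card (Bset s r P \<inter> Bset s r Q) = r - 2 \<longleftrightarrow>
    (\<forall>i\<in>{1..r} - {Min (excess_rows P Q), Max (excess_rows Q P)}. beta s P i \<in> Bset s r Q)"
proof -
  let ?x = "Min (excess_rows P Q)" and ?y = "Max (excess_rows Q P)"
  let ?W = "{1..r} - {?x, ?y}"
  have "?x \<in> {1..r}" "?y \<in> {1..r}" "?x \<noteq> ?y"
    using extreme_rows_mem[OF assms] excess_rows_subset_r excess_rows_disjoint[of ?x P Q] by auto
  moreover have "inj_on (beta s P) ?W"
    by (rule inj_on_subset[OF inj_on_beta[OF partition_P]]) auto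
  ultimately have card_W: "card (beta s P ` ?W) = r - 2"
    by (simp add: card_image card_Diff_subset)
  have sub: "Bset s r P \<inter> Bset s r Q \<subseteq> beta s P ` ?W" by (rule Bset_inter_subset[OF assms])
  have "beta s P ` ?W \<subseteq> Bset s r P" by (auto simp: Bset_def)
  have "card (Bset s r P \<inter> Bset s r Q) = r - 2 \<longleftrightarrow> Bset s r P \<inter> Bset s r Q = beta s P ` ?W"
  proof
    assume "card (Bset s r P \<inter> Bset s r Q) = r - 2"
    then show "Bset s r P \<inter> Bset s r Q = beta s P ` ?W"
      using card_subset_eq[OF _ sub] card_W by simp
  qed (use card_W in simp)
  also have "\<dots> \<longleftrightarrow> beta s P ` ?W \<subseteq> Bset s r Q"
    using sub \<open>beta s P ` ?W \<subseteq> Bset s r P\<close> by blast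
  finally show ?thesis by blast
qed

lemma ribbon_rows_if_card_Bset_inter:
  assumes "P \<noteq> Q" "card (Bset s r P \<inter> Bset s r Q) = r - 2"
  shows "ribbon_rows P Q (Min (excess_rows P Q)) (Max (excess_rows P Q))"
proof (rule ribbon_rows_if_beta_matched[OF partition_P partition_Q excess_rows_nonempty[OF assms(1)]])
  fix i assume i: "i \<in> excess_rows P Q" "i \<noteq> Min (excess_rows P Q)"
  have "i \<in> {1..r}" "i \<noteq> Max (excess_rows Q P)"
    using i(1) extreme_rows_mem(2)[OF assms(1)] excess_rows_subset_r excess_rows_disjoint[of i P Q]
    by auto
  then have "beta s P i \<in> Bset s r Q" using i assms card_Bset_inter_eq_iff by blast
  then show "\<exists>j\<ge>1. beta s P i = beta s Q j" by (auto simp: Bset_def)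
qed

end

section \<open>The sorting permutation and dominance\<close>

text \<open>The product of the cycles (x' x x-1 ... x'+1) and (y' y y+1 ... y'-1); it moves each
  beta-number of P to its position in gamma below.\<close>

definition ribbon_perm :: "nat \<Rightarrow> nat \<Rightarrow> nat \<Rightarrow> nat \<Rightarrow> nat \<Rightarrow> nat" where
  "ribbon_perm x' x y y' i =
    (if i = x' then x else if x' < i \<and> i \<le> x then i - 1
     else if i = y' then y else if y \<le> i \<and> i < y' then i + 1 else i)"

lemma coxeter_length_ribbon_perm:
  assumes "1 \<le> x'" "x' \<le> x" "x \<le> r" "1 \<le> y" "y \<le> y'" "y' \<le> r" "x < y \<or> y' < x'"
  shows "coxeter_length r (ribbon_perm x' x y y') = (x - x') + (y' - y)"
proof -
  let ?\<sigma> = "ribbon_perm x' x y y'"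
  have "{(i, j). 1 \<le> i \<and> i < j \<and> j \<le> r \<and> ?\<sigma> j < ?\<sigma> i} = {x'} \<times> {x'<..x} \<union> {y..<y'} \<times> {y'}"
  proof (intro set_eqI iffI)
    fix p assume "p \<in> {(i, j). 1 \<le> i \<and> i < j \<and> j \<le> r \<and> ?\<sigma> j < ?\<sigma> i}"
    then show "p \<in> {x'} \<times> {x'<..x} \<union> {y..<y'} \<times> {y'}"
      using assms by (cases p) (simp add: ribbon_perm_def split: if_split_asm; linarith)
  next
    fix p assume "p \<in> {x'} \<times> {x'<..x} \<union> {y..<y'} \<times> {y'}"
    then show "p \<in> {(i, j). 1 \<le> i \<and> i < j \<and> j \<le> r \<and> ?\<sigma> j < ?\<sigma> i}"
      using assms by (cases p) (auto simp: ribbon_perm_def)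
  qed
  moreover have "{x'} \<times> {x'<..x} \<inter> {y..<y'} \<times> {y'} = {}" using assms by auto
  ultimately show ?thesis
    unfolding coxeter_length_def by (simp add: card_Un_disjoint)
qed

lemma coxeter_length_cong:
  assumes "\<And>i. i \<in> {1..r} \<Longrightarrow> \<pi> i = \<sigma> i"
  shows "coxeter_length r \<pi> = coxeter_length r \<sigma>"
proof -
  have "{(i, j). 1 \<le> i \<and> i < j \<and> j \<le> r \<and> \<pi> j < \<pi> i} =
      {(i, j). 1 \<le> i \<and> i < j \<and> j \<le> r \<and> \<sigma> j < \<sigma> i}"
    using assms by auto
  then show ?thesis by (simp add: coxeter_length_def)
qed

lemma strictly_decreasing_unique:
  fixes f g :: "nat \<Rightarrow> 'a :: linorder"
  assumes f: "\<And>i j. 1 \<le> i \<Longrightarrow> i < j \<Longrightarrow> j \<le> r \<Longrightarrow> f j < f i"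
    and g: "\<And>i j. 1 \<le> i \<Longrightarrow> i < j \<Longrightarrow> j \<le> r \<Longrightarrow> g j < g i"
    and image: "f ` {1..r} = g ` {1..r}" and i: "i \<in> {1..r}"
  shows "f i = g i"
proof -
  let ?list = "\<lambda>h :: nat \<Rightarrow> 'a. rev (map h [1..<r+1])"
  have sorted: "sorted_wrt (<) (?list h)"
    if "\<And>i j. 1 \<le> i \<Longrightarrow> i < j \<Longrightarrow> j \<le> r \<Longrightarrow> h j < h i" for h
  proof -
    have "sorted_wrt (>) (map h [1..<r+1])"
      unfolding sorted_wrt_iff_nth_less using that by (auto simp del: upt_Suc)
    then show ?thesis by (simp add: sorted_wrt_rev)
  qed
  have "set (?list f) = set (?list g)"
    using image by (simp del: upt_Suc add: atLeastLessThanSuc_atLeastAtMost)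
  then have "?list f = ?list g"
    using sorted[of f, OF f] sorted[of g, OF g] by (intro sorted_distinct_set_unique) (auto simp: strict_sorted_iff)
  then have "map f [1..<r+1] = map g [1..<r+1]" by simp
  then show ?thesis using i by (simp del: upt_Suc add: map_eq_conv)
qed

lemma dominated_if_single_crossing:
  assumes "psize Q = psize P"
    and "\<And>i. 1 \<le> i \<Longrightarrow> i < c \<Longrightarrow> part Q i \<le> part P i"
    and "\<And>i. c \<le> i \<Longrightarrow> part P i \<le> part Q i"
  shows "dominated Q P"
  unfolding dominated_def
proof (intro conjI allI)
  fix k
  show "(\<Sum>j=1..k. part Q j) \<le> (\<Sum>j=1..k. part P j)"
  proof (cases "k < c")
    case True
    then show ?thesis using assms(2) by (intro sum_mono) auto
  next
    case False
    define N where "N = max k (max (length P) (length Q))"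
    have split: "(\<Sum>j=1..N. f j) = (\<Sum>j=1..k. f j) + (\<Sum>j=Suc k..N. f j)" for f :: "nat \<Rightarrow> nat"
      using sum.ub_add_nat[of 1 k "\<lambda>j. f j" "N - k"] by (simp add: N_def)
    have "(\<Sum>j=1..N. part Q j) = (\<Sum>j=1..N. part P j)"
      using assms(1) sum_list_eq_sum_part[of P N] sum_list_eq_sum_part[of Q N]
      by (simp add: psize_def N_def)
    moreover have "(\<Sum>j=Suc k..N. part P j) \<le> (\<Sum>j=Suc k..N. part Q j)"
      using assms(3) False by (intro sum_mono) auto
    ultimately show ?thesis using split[of "part P"] split[of "part Q"] by linarith
  qed
qed (use assms(1) in simp)

lemma dominated_antisym:
  assumes "is_partition P" "is_partition Q" "dominated P Q" "dominated Q P"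
  shows "P = Q"
proof (rule partition_eqI[OF assms(1,2)])
  have sums: "(\<Sum>j=1..k. part P j) = (\<Sum>j=1..k. part Q j)" for k
    using assms(3,4) by (auto simp: dominated_def intro: order.antisym)
  fix i :: nat assume "1 \<le> i"
  then show "part P i = part Q i"
    using sums[of i] sums[of "i - 1"] by (cases i) simp_all
qed

section \<open>Two ribbons between partitions of the same size\<close>

locale ribbon_pair = equal_size_partitions +
  fixes x' x y y' :: nat
  assumes ribbon_rows_P: "ribbon_rows P Q x' x" and ribbon_rows_Q: "ribbon_rows Q P y y'"
begin

lemma ribbon_pair_sym: "ribbon_pair Q P r y y' x' x"
  using equal_size_partitions_sym ribbon_rows_P ribbon_rows_Q
  by (simp add: ribbon_pair_def ribbon_pair_axioms_def)

lemma excess_rows_eq: "excess_rows P Q = {x'..x}" "excess_rows Q P = {y..y'}"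
  using ribbon_rows_P ribbon_rows_Q by (simp_all add: ribbon_rows_def)

lemma rows_bounds: "1 \<le> x'" "x' \<le> x" "x \<le> r" "1 \<le> y" "y \<le> y'" "y' \<le> r"
  using ribbon_rows_P ribbon_rows_Q excess_rows_subset_r by (auto simp: ribbon_rows_def)

lemma part_le_outside_rows:
  assumes "1 \<le> i"
  shows "\<not> (x' \<le> i \<and> i \<le> x) \<Longrightarrow> part P i \<le> part Q i"
    and "\<not> (y \<le> i \<and> i \<le> y') \<Longrightarrow> part Q i \<le> part P i"
proof -
  assume "\<not> (x' \<le> i \<and> i \<le> x)"
  then have "i \<notin> excess_rows P Q" using excess_rows_eq(1) by simp
  then show "part P i \<le> part Q i" using assms by (simp add: excess_rows_def)
next
  assume "\<not> (y \<le> i \<and> i \<le> y')"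
  then have "i \<notin> excess_rows Q P" using excess_rows_eq(2) by simp
  then show "part Q i \<le> part P i" using assms by (simp add: excess_rows_def)
qed

lemma rows_disjoint: "\<not> (x' \<le> i \<and> i \<le> x \<and> y \<le> i \<and> i \<le> y')"
  using excess_rows_disjoint[of i P Q] excess_rows_eq by simp

lemma rows_order: "y' < x' \<longleftrightarrow> \<not> x < y"
  using rows_disjoint[of "max x' y"] rows_disjoint[of x] rows_bounds by linarith

lemma rows_order_exclusive: "(y \<le> y' \<and> y' < x' \<and> x' \<le> x) \<noteq> (x' \<le> x \<and> x < y \<and> y \<le> y')"
  using rows_order rows_bounds by auto

lemma P_ne_Q: "P \<noteq> Q"
  using excess_rows_eq rows_bounds by (auto simp: excess_rows_def)

lemma ribbon_perm_simps:
  "ribbon_perm x' x y y' x' = x"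
  "ribbon_perm x' x y y' y' = y"
  "x' < i \<Longrightarrow> i \<le> x \<Longrightarrow> ribbon_perm x' x y y' i = i - 1"
  "y \<le> i \<Longrightarrow> i < y' \<Longrightarrow> ribbon_perm x' x y y' i = i + 1"
  "\<not> (x' \<le> i \<and> i \<le> x) \<Longrightarrow> \<not> (y \<le> i \<and> i \<le> y') \<Longrightarrow> ribbon_perm x' x y y' i = i"
  using rows_disjoint[of y'] rows_disjoint[of i] rows_bounds by (auto simp: ribbon_perm_def)

lemma ribbon_perm_cases:
  assumes "i \<noteq> x'" "i \<noteq> y'"
  obtains (P_row) "x' < i" "i \<le> x" | (Q_row) "y \<le> i" "i < y'"
    | (common) "\<not> (x' \<le> i \<and> i \<le> x)" "\<not> (y \<le> i \<and> i \<le> y')"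
  using assms by linarith

lemma beta_ribbon_perm:
  assumes "1 \<le> i" "i \<noteq> x'" "i \<noteq> y'"
  shows "beta s P i = beta s Q (ribbon_perm x' x y y' i)"
  using assms(2,3)
proof (cases rule: ribbon_perm_cases)
  case P_row
  then have "beta s P (Suc (i - 1)) = beta s Q (i - 1)"
    by (intro ribbon_rows_beta_Suc[OF ribbon_rows_P]) auto
  then show ?thesis using P_row by (simp add: ribbon_perm_simps)
next
  case Q_row
  then show ?thesis using ribbon_rows_beta_Suc[OF ribbon_rows_Q Q_row] by (simp add: ribbon_perm_simps)
next
  case common
  then have "part P i = part Q i" using part_le_outside_rows[OF assms(1)] by simp
  then show ?thesis using common by (simp add: ribbon_perm_simps beta_def)
qed

lemma ribbon_perm_in: "i \<in> {1..r} \<Longrightarrow> ribbon_perm x' x y y' i \<in> {1..r}"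
  using rows_bounds by (auto simp: ribbon_perm_def)

lemma ribbon_perm_ne:
  assumes "i \<noteq> x'" "i \<noteq> y'"
  shows "ribbon_perm x' x y y' i \<noteq> x \<and> ribbon_perm x' x y y' i \<noteq> y"
  using assms
proof (cases rule: ribbon_perm_cases)
  case P_row
  then show ?thesis using rows_disjoint[of y] rows_bounds by (simp add: ribbon_perm_simps) arith
next
  case Q_row
  then show ?thesis using rows_disjoint[of x] rows_bounds by (simp add: ribbon_perm_simps) arith
next
  case common
  then show ?thesis using rows_bounds by (auto simp: ribbon_perm_simps)
qed

lemma Bset_inter_eq: "Bset s r P \<inter> Bset s r Q = beta s P ` ({1..r} - {x', y'})"
proof
  show "Bset s r P \<inter> Bset s r Q \<subseteq> beta s P ` ({1..r} - {x', y'})"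
    using Bset_inter_subset[OF P_ne_Q] ribbon_rows_Min_Max[OF ribbon_rows_P]
      ribbon_rows_Min_Max[OF ribbon_rows_Q] by simp
  show "beta s P ` ({1..r} - {x', y'}) \<subseteq> Bset s r P \<inter> Bset s r Q"
  proof
    fix v assume "v \<in> beta s P ` ({1..r} - {x', y'})"
    then obtain i where i: "i \<in> {1..r}" "i \<noteq> x'" "i \<noteq> y'" "v = beta s P i" by blast
    then have "v = beta s Q (ribbon_perm x' x y y' i)" using beta_ribbon_perm by simp
    then show "v \<in> Bset s r P \<inter> Bset s r Q"
      using i ribbon_perm_in[OF i(1)] unfolding Bset_def by blast
  qed
qed

lemma card_Bset_inter: "card (Bset s r P \<inter> Bset s r Q) = r - 2"
  using card_Bset_inter_eq_iff[OF P_ne_Q] Bset_inter_eq ribbon_rows_Min_Max[OF ribbon_rows_P]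
    ribbon_rows_Min_Max[OF ribbon_rows_Q]
  by auto

lemma beta_image_eq: "beta s P ` ({1..r} - {x', y'}) = beta s Q ` ({1..r} - {x, y})"
  using Bset_inter_eq ribbon_pair.Bset_inter_eq[OF ribbon_pair_sym]
  by (simp add: Int_commute insert_commute)

lemma beta_head_row_P: "beta s Q x = beta s P x' - int (card (diagram P - diagram Q))"
  using card_ribbon[OF ribbon_rows_P, of s] by simp

lemma beta_head_row_Q: "beta s P y' = beta s Q y - int (card (diagram P - diagram Q))"
  using card_ribbon[OF ribbon_rows_Q, of s] card_diagram_diff_sym by simp

lemma rows_of_heads_tails:
  "fst (head (diagram P - diagram Q)) = x" "fst (tail (diagram P - diagram Q)) = x'"
  "fst (head (diagram Q - diagram P)) = y'" "fst (tail (diagram Q - diagram P)) = y"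
  using head_ribbon tail_ribbon partition_P partition_Q ribbon_rows_P ribbon_rows_Q by simp_all

lemma content_heads:
  "content s (head (diagram P - diagram Q)) = beta s Q x"
  "content s (head (diagram Q - diagram P)) = beta s P y'"
  using content_head_ribbon partition_P partition_Q ribbon_rows_P ribbon_rows_Q by simp_all

definition gamma :: "int \<Rightarrow> nat \<Rightarrow> int" where
  "gamma s = (\<lambda>i. if i = x then beta s Q x + int (card (diagram P - diagram Q))
     else if i = y then beta s Q y - int (card (diagram P - diagram Q)) else beta s Q i)"

lemma gamma_ribbon_perm:
  assumes "i \<in> {1..r}"
  shows "gamma s (ribbon_perm x' x y y' i) = beta s P i"
proof -
  have "x \<noteq> y" using rows_disjoint[of x] rows_bounds by auto
  consider "i = x'" | "i = y'" | "i \<noteq> x'" "i \<noteq> y'" by blast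
  then show ?thesis
  proof cases
    case 1
    then show ?thesis using beta_head_row_P[of s] by (simp add: ribbon_perm_simps gamma_def)
  next
    case 2
    then show ?thesis using beta_head_row_Q[of s] \<open>x \<noteq> y\<close> by (simp add: ribbon_perm_simps gamma_def)
  next
    case 3
    then show ?thesis
      using assms beta_ribbon_perm[of i] ribbon_perm_ne[of i] by (simp add: gamma_def)
  qed
qed

lemma gamma_image: "gamma s ` {1..r} = Bset s r P"
proof -
  have "Bset s r P \<subseteq> gamma s ` {1..r}"
  proof
    fix v assume "v \<in> Bset s r P"
    then obtain i where i: "i \<in> {1..r}" "v = beta s P i" by (auto simp: Bset_def)
    then have "v = gamma s (ribbon_perm x' x y y' i)" using gamma_ribbon_perm by simp
    then show "v \<in> gamma s ` {1..r}" using ribbon_perm_in[OF i(1)] by blast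
  qed
  moreover have "card (gamma s ` {1..r}) \<le> card (Bset s r P)"
    using card_image_le[of "{1..r}" "gamma s"] card_Bset[OF partition_P] by simp
  ultimately have "Bset s r P = gamma s ` {1..r}" by (intro card_seteq) simp_all
  then show ?thesis by simp
qed

lemma inj_on_gamma: "inj_on (gamma s) {1..r}"
  using gamma_image card_Bset[OF partition_P] by (intro eq_card_imp_inj_on) simp_all

lemma mset_gamma: "mset (map (gamma s) [1..<r+1]) = mset (map (beta s P) [1..<r+1])"
proof (rule set_eq_iff_mset_eq_distinct[THEN iffD1])
  have "set [1..<r+1] = {1..r}" by auto
  then show "distinct (map (gamma s) [1..<r+1])" "distinct (map (beta s P) [1..<r+1])"
    "set (map (gamma s) [1..<r+1]) = set (map (beta s P) [1..<r+1])"
    using inj_on_gamma inj_on_subset[OF inj_on_beta[OF partition_P]] gamma_image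
    by (auto simp: distinct_map Bset_def)
qed

lemma sorting_perm_eq_ribbon_perm:
  assumes "\<pi> permutes {1..r}" "\<And>i j. 1 \<le> i \<Longrightarrow> i < j \<Longrightarrow> j \<le> r \<Longrightarrow> gamma s (\<pi> j) < gamma s (\<pi> i)"
    and "i \<in> {1..r}"
  shows "\<pi> i = ribbon_perm x' x y y' i"
proof -
  have "(\<lambda>i. gamma s (\<pi> i)) ` {1..r} = beta s P ` {1..r}"
    using gamma_image permutes_image[OF assms(1)] by (simp add: image_image[symmetric] Bset_def)
  then have "gamma s (\<pi> i) = beta s P i"
    using strictly_decreasing_unique[OF assms(2) beta_strict_antimono[OF partition_P] _ assms(3)]
    by simp
  then have "gamma s (\<pi> i) = gamma s (ribbon_perm x' x y y' i)" using gamma_ribbon_perm assms(3) by simp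
  then show ?thesis
    using inj_onD[OF inj_on_gamma] permutes_in_image[OF assms(1)] ribbon_perm_in assms(3) by blast
qed

lemma coxeter_length_sorting_perm:
  assumes "\<pi> permutes {1..r} \<and> (\<forall>i j. 1 \<le> i \<and> i < j \<and> j \<le> r \<longrightarrow> gamma s (\<pi> j) < gamma s (\<pi> i))"
  shows "int (coxeter_length r \<pi>) = ht (diagram P - diagram Q) + ht (diagram Q - diagram P)"
proof -
  have "coxeter_length r \<pi> = coxeter_length r (ribbon_perm x' x y y')"
    using assms by (intro coxeter_length_cong sorting_perm_eq_ribbon_perm) auto
  also have "\<dots> = (x - x') + (y' - y)"
    using rows_bounds rows_order by (intro coxeter_length_ribbon_perm) auto
  finally show ?thesis
    using ht_ribbon[OF partition_P partition_Q ribbon_rows_P] ht_ribbon[OF partition_Q partition_P ribbon_rows_Q]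
      rows_bounds by simp
qed

lemma dominated_if_rows_above:
  assumes "y' < x'"
  shows "dominated P Q"
proof (rule dominated_if_single_crossing[where c = x'])
  show "psize P = psize Q" using psize_P psize_Q by simp
  show "part P i \<le> part Q i" if "1 \<le> i" "i < x'" for i
    using that part_le_outside_rows(1) by simp
  show "part Q i \<le> part P i" if "x' \<le> i" for i
    using that assms rows_bounds part_le_outside_rows(2) by simp
qed

lemma strictly_dominated_iff: "strictly_dominated P Q \<longleftrightarrow> y' < x'"
proof
  assume dom: "strictly_dominated P Q"
  show "y' < x'"
  proof (rule ccontr)
    assume "\<not> y' < x'"
    then have "dominated Q P"
      using rows_order ribbon_pair.dominated_if_rows_above[OF ribbon_pair_sym] by simp
    then show False
      using dom dominated_antisym[OF partition_P partition_Q] by (simp add: strictly_dominated_def)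
  qed
qed (use dominated_if_rows_above P_ne_Q in \<open>simp add: strictly_dominated_def\<close>)

lemma rows_above_iff_strictly_dominated:
  "(y \<le> y' \<and> y' < x' \<and> x' \<le> x) \<longleftrightarrow> strictly_dominated P Q"
  using strictly_dominated_iff rows_bounds by auto

end

context equal_size_partitions
begin

lemma card_Bset_inter_iff_ribbon_rows:
  assumes "P \<noteq> Q"
  shows "card (Bset s r P \<inter> Bset s r Q) = r - 2 \<longleftrightarrow>
    ribbon_rows P Q (Min (excess_rows P Q)) (Max (excess_rows P Q)) \<and>
    ribbon_rows Q P (Min (excess_rows Q P)) (Max (excess_rows Q P))"
proof
  assume "card (Bset s r P \<inter> Bset s r Q) = r - 2"
  then show "ribbon_rows P Q (Min (excess_rows P Q)) (Max (excess_rows P Q)) \<and>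
      ribbon_rows Q P (Min (excess_rows Q P)) (Max (excess_rows Q P))"
    using ribbon_rows_if_card_Bset_inter[OF assms]
      equal_size_partitions.ribbon_rows_if_card_Bset_inter[OF equal_size_partitions_sym] assms
    by (simp add: Int_commute)
next
  assume "ribbon_rows P Q (Min (excess_rows P Q)) (Max (excess_rows P Q)) \<and>
      ribbon_rows Q P (Min (excess_rows Q P)) (Max (excess_rows Q P))"
  then interpret ribbon_pair P Q r "Min (excess_rows P Q)" "Max (excess_rows P Q)"
      "Min (excess_rows Q P)" "Max (excess_rows Q P)"
    by unfold_locales auto
  show "card (Bset s r P \<inter> Bset s r Q) = r - 2" by (rule card_Bset_inter)
qed

end

theorem mainTheorem4:
  fixes s :: int and nu kappa :: "nat list" and r :: nat
  assumes "is_partition nu" and "is_partition kappa" and "nu \<noteq> kappa"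
    and "psize nu = r" and "psize kappa = r"
  defines "rho \<equiv> diagram nu - (diagram nu \<inter> diagram kappa)"
    and "rho' \<equiv> diagram kappa - (diagram nu \<inter> diagram kappa)"
  shows "((is_ribbon rho \<and> is_ribbon rho') \<longleftrightarrow>
           int (card (Bset s r nu \<inter> Bset s r kappa)) = int r - 2)
     \<and> (int (card (Bset s r nu \<inter> Bset s r kappa)) = int r - 2 \<longrightarrow>
         (let h = card rho;
              x = fst (head rho); x' = fst (tail rho);
              y = fst (tail rho'); y' = fst (head rho');
              \<gamma> = (\<lambda>i. if i = x then beta s kappa x + int h
                       else if i = y then beta s kappa y - int h
                       else beta s kappa i)
          in card rho' = h
           \<and> beta s nu ` ({1..r} - {x', y'}) = beta s kappa ` ({1..r} - {x, y})
           \<and> content s (head rho) = beta s kappa x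
           \<and> beta s kappa x = beta s nu x' - int h
           \<and> content s (head rho') = beta s nu y'
           \<and> beta s nu y' = beta s kappa y - int h
           \<and> mset (map \<gamma> [1..<r+1]) = mset (map (beta s nu) [1..<r+1])
           \<and> (\<forall>\<pi>. \<pi> permutes {1..r} \<and>
                  (\<forall>i j. 1 \<le> i \<and> i < j \<and> j \<le> r \<longrightarrow> \<gamma> (\<pi> j) < \<gamma> (\<pi> i))
                  \<longrightarrow> int (coxeter_length r \<pi>) = ht rho + ht rho')
           \<and> ((y \<le> y' \<and> y' < x' \<and> x' \<le> x) \<noteq> (x' \<le> x \<and> x < y \<and> y \<le> y'))
           \<and> ((y \<le> y' \<and> y' < x' \<and> x' \<le> x) \<longleftrightarrow> strictly_dominated nu kappa)
           \<and> ((x' \<le> x \<and> x < y \<and> y \<le> y') \<longleftrightarrow> strictly_dominated kappa nu)))"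
proof -
  interpret equal_size_partitions nu kappa r using assms(1,2,4,5) by unfold_locales
  have rho_eq: "rho = diagram nu - diagram kappa" and rho'_eq: "rho' = diagram kappa - diagram nu"
    unfolding rho_def rho'_def by auto
  have ribbons_iff: "(is_ribbon (diagram nu - diagram kappa) \<and> is_ribbon (diagram kappa - diagram nu))
      \<longleftrightarrow> card (Bset s r nu \<inter> Bset s r kappa) = r - 2"
    unfolding is_ribbon_diff_iff[OF assms(1,2)] is_ribbon_diff_iff[OF assms(2,1)]
    by (rule card_Bset_inter_iff_ribbon_rows[OF assms(3), symmetric])
  have card_iff: "int (card (Bset s r nu \<inter> Bset s r kappa)) = int r - 2 \<longleftrightarrow>
      card (Bset s r nu \<inter> Bset s r kappa) = r - 2"
    using two_le_r[OF assms(3)] by auto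
  show ?thesis
  proof (cases "card (Bset s r nu \<inter> Bset s r kappa) = r - 2")
    case True
    then interpret ribbon_pair nu kappa r "Min (excess_rows nu kappa)" "Max (excess_rows nu kappa)"
        "Min (excess_rows kappa nu)" "Max (excess_rows kappa nu)"
      using card_Bset_inter_iff_ribbon_rows[OF assms(3)] by unfold_locales simp_all
    have "(is_ribbon rho \<and> is_ribbon rho') \<longleftrightarrow> int (card (Bset s r nu \<inter> Bset s r kappa)) = int r - 2"
      using ribbons_iff card_iff True by (simp add: rho_eq rho'_eq)
    then show ?thesis
      unfolding Let_def rho_eq rho'_eq rows_of_heads_tails
      using card_diagram_diff_sym[symmetric] beta_image_eq content_heads beta_head_row_P
        beta_head_row_Q mset_gamma[unfolded gamma_def] rows_order_exclusive
        rows_above_iff_strictly_dominated ribbon_pair.rows_above_iff_strictly_dominated[OF ribbon_pair_sym]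
        coxeter_length_sorting_perm[unfolded gamma_def]
      by (intro conjI impI allI) assumption+
  qed (use ribbons_iff card_iff in \<open>simp add: rho_eq rho'_eq\<close>)
qed

end
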